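(* There is a constant $c>0$ such that for all sufficiently large $n$ and every $\sigma\in[0,1]$, \[\min_x\left\{\frac{\binom{1-\sigma/2}{x-\sigma/2}_n+\binom{1-(1-\sigma)/2}{x}_n}{\binom{1/2}{x-\sigma/2}_n}\right\}\ \le\ 2^{n(1-h(1/4))}\,n^{c},\] where the minimum is over real $x$ with $0\le x-\sigma/2\le 1/2$ and $0\le x\le 1-(1-\sigma)/2$.
   Context: For reals $a\ge b\ge 0$, $\binom{a}{b}_n$ denotes the binomial coefficient $\binom{\lfloor an\rfloor}{\lfloor bn\rfloor}$. $h(x)=-x\log_2x-(1-x)\log_2(1-x)$ (with $h(0)=h(1)=0$) is the binary entropy function. *)

theory Defs
  imports Complex_Main
begin

definition bin_entropy :: "real \<Rightarrow> real" where
  "bin_entropy x = (if x = 0 \<or> x = 1 then 0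
     else - x * log 2 x - (1 - x) * log 2 (1 - x))"

text \<open>binom_n a b n denotes the binomial coefficient (floor(a n) choose floor(b n)),
  intended for reals a \<ge> b \<ge> 0 (so both floors are nonnegative).\<close>
definition binom_n :: "real \<Rightarrow> real \<Rightarrow> nat \<Rightarrow> real" where
  "binom_n a b n = real (nat \<lfloor>a * real n\<rfloor> choose nat \<lfloor>b * real n\<rfloor>)"

end

theory Submission
  imports Defs
begin

text \<open>
  The minimum is bounded by its value at the single point \<open>x = \<sigma>/2 + g \<sigma>\<close>, where
  \<open>g = lower_index\<close> is affine with \<open>g (1/2) = 1/4\<close>. Up to factors polynomial in \<open>n\<close>,
  \<open>binom_n a b n\<close> equals \<open>exp (n * binom_rate a b)\<close>, and then the two summands of the
  ratio become \<open>exp (n * E \<sigma>)\<close> and \<open>exp (n * E (1 - \<sigma>))\<close> for one function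
  \<open>E = excess\<close>. This \<open>E\<close> is concave on \<open>[0, 1]\<close>, and the slope of \<open>g\<close> is chosen
  so that \<open>E' (1/2) = 0\<close>; hence \<open>E \<le> E (1/2) = (1 - h (1/4)) ln 2\<close>. The polynomial
  factors are absorbed into \<open>n\<^sup>2\<close>.
\<close>

text \<open>\<open>binom_rate a b = a h (b/a) ln 2\<close>, the exponential growth rate of \<open>binom_n a b n\<close>.\<close>

definition binom_rate :: "real \<Rightarrow> real \<Rightarrow> real" where
  "binom_rate a b = a * ln a - b * ln b - (a - b) * ln (a - b)"

lemma binom_rate_powr:
  assumes "0 < b" "b < a"
  shows "(b / a) powr (b * x) * ((a - b) / a) powr ((a - b) * x) = exp (- x * binom_rate a b)"
proof -
  have "(b / a) powr (b * x) * ((a - b) / a) powr ((a - b) * x)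
      = exp (x * (b * (ln b - ln a) + (a - b) * (ln (a - b) - ln a)))"
    using assms by (simp add: powr_def ln_div exp_add[symmetric] algebra_simps)
  also have "\<dots> = exp (- x * binom_rate a b)"
    unfolding binom_rate_def by (simp add: algebra_simps)
  finally show ?thesis .
qed

lemma binomial_term_le_one:
  fixes q :: real
  assumes "0 \<le> q" "q \<le> 1"
  shows "real (N choose K) * q ^ K * (1 - q) ^ (N - K) \<le> 1"
proof (cases "K \<le> N")
  case True
  have "real (N choose K) * q ^ K * (1 - q) ^ (N - K)
      \<le> (\<Sum>k\<le>N. real (N choose k) * q ^ k * (1 - q) ^ (N - k))"
    using assms True by (intro member_le_sum) auto
  also have "\<dots> = 1"
    using binomial_ring[of q "1 - q" N] by simp
  finally show ?thesis .
qed (simp add: binomial_eq_0)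

lemma binomial_weight_bounds:
  fixes a b :: real and n :: nat
  assumes "0 < b" "b < a"
  defines "q \<equiv> b / a" and "N \<equiv> nat \<lfloor>a * n\<rfloor>" and "K \<equiv> nat \<lfloor>b * n\<rfloor>"
  shows "(1 - q) * exp (- real n * binom_rate a b) \<le> q ^ K * (1 - q) ^ (N - K)"
    and "q ^ K * (1 - q) ^ (N - K) \<le> exp (- real n * binom_rate a b) / (q * (1 - q))"
proof -
  have q: "0 < q" "q < 1" "1 - q = (a - b) / a"
    using assms by (auto simp: q_def field_simps)
  have "K \<le> N"
    using assms unfolding N_def K_def by (intro nat_mono floor_mono mult_right_mono) auto
  moreover have "a * n - 1 < N" "N \<le> a * n" "b * n - 1 < K" "K \<le> b * n"
    using assms by (auto simp: N_def K_def)
  ultimately have K: "b * n - 1 \<le> K" "K \<le> b * n"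
    and NK: "(a - b) * n - 1 \<le> real (N - K)" "real (N - K) \<le> (a - b) * n + 1"
    by (auto simp: of_nat_diff left_diff_distrib)
  have rate: "q powr (b * n) * (1 - q) powr ((a - b) * n) = exp (- real n * binom_rate a b)"
    using binom_rate_powr[OF assms(1,2), of n] q(3) by (simp add: q_def)
  have weight: "q ^ K * (1 - q) ^ (N - K) = q powr K * (1 - q) powr (N - K)"
    using q by (simp add: powr_realpow)
  have "(1 - q) * exp (- real n * binom_rate a b)
      = q powr (b * n) * (1 - q) powr ((a - b) * n + 1)"
    using q(2) rate by (simp add: powr_add mult_ac)
  also have "\<dots> \<le> q ^ K * (1 - q) ^ (N - K)"
    unfolding weight using q K NK by (intro mult_mono powr_mono') auto
  finally show "(1 - q) * exp (- real n * binom_rate a b) \<le> q ^ K * (1 - q) ^ (N - K)" .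
  have "q ^ K * (1 - q) ^ (N - K) \<le> q powr (b * n - 1) * (1 - q) powr ((a - b) * n - 1)"
    unfolding weight using q K NK by (intro mult_mono powr_mono') auto
  also have "\<dots> = q powr (b * n) * (1 - q) powr ((a - b) * n) / (q * (1 - q))"
    using q(1,2) by (simp add: powr_diff)
  finally show "q ^ K * (1 - q) ^ (N - K) \<le> exp (- real n * binom_rate a b) / (q * (1 - q))"
    by (simp only: rate)
qed

lemma binom_n_le_exp_rate:
  assumes "0 < b" "b < a"
  shows "binom_n a b n \<le> a / (a - b) * exp (real n * binom_rate a b)"
proof -
  define q where "q = b / a"
  define w where "w = q ^ nat \<lfloor>b * n\<rfloor> * (1 - q) ^ (nat \<lfloor>a * n\<rfloor> - nat \<lfloor>b * n\<rfloor>)"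
  have q: "0 < q" "q < 1" "1 - q = (a - b) / a"
    using assms by (auto simp: q_def field_simps)
  have "binom_n a b n * w \<le> 1"
    using binomial_term_le_one q(1,2) by (simp add: binom_n_def w_def mult.assoc)
  then have "binom_n a b n \<le> 1 / w"
    using q(1,2) by (simp add: w_def field_simps)
  also have "\<dots> \<le> 1 / ((1 - q) * exp (- real n * binom_rate a b))"
    using binomial_weight_bounds(1)[OF assms, of n] q(1,2)
    by (intro divide_left_mono mult_pos_pos) (auto simp: w_def q_def)
  also have "\<dots> = a / (a - b) * exp (real n * binom_rate a b)"
    using assms by (simp add: q(3) exp_minus field_simps)
  finally show ?thesis .
qed

lemma binomial_term_Suc:
  fixes q :: real
  assumes "j < M"
  shows "real (M choose Suc j) * q ^ Suc j * (1 - q) ^ (M - Suc j) * (real (Suc j) * (1 - q))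
       = real (M choose j) * q ^ j * (1 - q) ^ (M - j) * (real (M - j) * q)"
proof -
  have "real (M - j) * real (M choose j) = real (Suc j) * real (M choose Suc j)"
    using binomial_absorb_comp[of M j] binomial_absorption[of j M] by (metis of_nat_mult)
  moreover have "(1 - q) ^ (M - j) = (1 - q) ^ (M - Suc j) * (1 - q)"
    using assms by (metis Suc_diff_Suc power_Suc2)
  ultimately show ?thesis
    by (simp add: mult_ac)
qed

lemma le_peak_times_growth:
  fixes t :: "nat \<Rightarrow> real"
  assumes "L \<le> M" "1 \<le> \<rho>" "\<And>j. 0 \<le> t j"
    and inc: "\<And>j. j < L \<Longrightarrow> t j \<le> t (Suc j)"
    and grow: "\<And>j. L \<le> j \<Longrightarrow> j < M \<Longrightarrow> t (Suc j) \<le> \<rho> * t j"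
    and "j \<le> M"
  shows "t j \<le> \<rho> ^ M * t L"
proof (cases "j \<le> L")
  case True
  then have "t j \<le> t L"
  proof (induction j rule: inc_induct)
    case (step i)
    then show ?case
      using inc[of i] by simp
  qed simp
  also have "\<dots> \<le> \<rho> ^ M * t L"
    using assms(2) assms(3)[of L] by (simp add: mult_le_cancel_right1 one_le_power)
  finally show ?thesis .
next
  case False
  then have "L \<le> j"
    by simp
  then have "t j \<le> \<rho> ^ (j - L) * t L"
    using \<open>j \<le> M\<close>
  proof (induction j rule: dec_induct)
    case (step i)
    then have "t (Suc i) \<le> \<rho> * t i"
      by (intro grow) auto
    also have "\<dots> \<le> \<rho> * (\<rho> ^ (i - L) * t L)"
      using step assms(2) by (intro mult_left_mono) auto
    finally show ?case
      using step by (simp add: Suc_diff_le)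
  qed simp
  also have "\<dots> \<le> \<rho> ^ M * t L"
    using assms \<open>j \<le> M\<close> by (intro mult_right_mono power_increasing) auto
  finally show ?thesis .
qed

lemma binomial_term_mode_bound:
  fixes q \<rho> :: real and L M :: nat
  defines "t \<equiv> \<lambda>j. real (M choose j) * q ^ j * (1 - q) ^ (M - j)"
  assumes q: "0 < q" "q < 1" and "1 \<le> \<rho>" "L \<le> M"
    and up: "\<And>j. j < L \<Longrightarrow> real (Suc j) * (1 - q) \<le> real (M - j) * q"
    and down: "\<And>j. L \<le> j \<Longrightarrow> j < M \<Longrightarrow> real (M - j) * q \<le> \<rho> * (real (Suc j) * (1 - q))"
  shows "1 \<le> (M + 1) * \<rho> ^ M * t L"
proof -
  have t_nonneg: "0 \<le> t j" for j
    using q by (simp add: t_def)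
  have step: "t (Suc j) * (real (Suc j) * (1 - q)) = t j * (real (M - j) * q)" if "j < M" for j
    unfolding t_def by (rule binomial_term_Suc[OF that])
  have "t j \<le> t (Suc j)" if "j < L" for j
  proof -
    have "t j * (real (M - j) * q) = t (Suc j) * (real (Suc j) * (1 - q))"
      using that \<open>L \<le> M\<close> by (intro step[symmetric]) simp
    also have "\<dots> \<le> t (Suc j) * (real (M - j) * q)"
      using up[OF that] t_nonneg by (rule mult_left_mono)
    finally show ?thesis
      using q that \<open>L \<le> M\<close> by (simp add: mult_le_cancel_right)
  qed
  moreover have "t (Suc j) \<le> \<rho> * t j" if "L \<le> j" "j < M" for j
  proof -
    have "t (Suc j) * (real (Suc j) * (1 - q)) = t j * (real (M - j) * q)"
      using step that by simp
    also have "\<dots> \<le> t j * (\<rho> * (real (Suc j) * (1 - q)))"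
      using down[OF that] t_nonneg by (rule mult_left_mono)
    finally have "t (Suc j) * (real (Suc j) * (1 - q)) \<le> (\<rho> * t j) * (real (Suc j) * (1 - q))"
      by (simp only: mult_ac)
    moreover have "0 < real (Suc j) * (1 - q)"
      using q by simp
    ultimately show ?thesis
      by (rule mult_right_le_imp_le)
  qed
  ultimately have "t j \<le> \<rho> ^ M * t L" if "j \<le> M" for j
    using assms t_nonneg that by (intro le_peak_times_growth[of L M \<rho> t j]) auto
  then have "(\<Sum>j\<le>M. t j) \<le> (M + 1) * (\<rho> ^ M * t L)"
    using sum_bounded_above[of "{..M}" t] by simp
  moreover have "(\<Sum>j\<le>M. t j) = 1"
    using binomial_ring[of q "1 - q" M] by (simp add: t_def)
  ultimately show ?thesis
    by (simp add: mult.assoc)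
qed

lemma one_plus_inverse_power_le_exp:
  assumes "0 < c"
  shows "(1 + 1 / c) ^ N \<le> exp (N / c)"
proof -
  have "(1 + 1 / c) ^ N \<le> exp (1 / c) ^ N"
    using assms exp_ge_add_one_self[of "1 / c"] by (intro power_mono) (auto simp: add.commute)
  then show ?thesis
    by (simp add: exp_of_nat_mult[symmetric])
qed

lemma binomial_term_at_floor_ge:
  fixes a b :: real and n :: nat
  assumes "0 < b" "b < a" "0 < n"
  defines "q \<equiv> b / a" and "N \<equiv> nat \<lfloor>a * n\<rfloor>" and "K \<equiv> nat \<lfloor>b * n\<rfloor>"
  shows "1 / ((a * n + 1) * exp (a / (a - b))) \<le> real (N choose K) * q ^ K * (1 - q) ^ (N - K)"
proof -
  define \<rho> where "\<rho> = 1 + 1 / ((a - b) * n)"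
  define t where "t = (\<lambda>j. real (N choose j) * q ^ j * (1 - q) ^ (N - j))"
  have q: "0 < q" "q < 1" "1 - q = (a - b) / a"
    using assms by (auto simp: q_def field_simps)
  have N: "a * n - 1 < N" "N \<le> a * n" and K: "b * n - 1 < K" "K \<le> b * n"
    using assms by (auto simp: N_def K_def)
  have "K \<le> N"
    using assms unfolding N_def K_def by (intro nat_mono floor_mono mult_right_mono) auto
  have \<rho>1: "1 \<le> \<rho>"
    using assms by (simp add: \<rho>_def)
  have mode: "1 \<le> (N + 1) * \<rho> ^ N * t K"
    unfolding t_def
  proof (rule binomial_term_mode_bound)
    fix j
    assume "j < K"
    then have j: "real j + 1 \<le> K"
      by linarith
    have "real (Suc j) * (1 - q) \<le> b * n * (1 - q)"
      using j K q by (intro mult_right_mono) auto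
    also have "\<dots> = (a - b) * n * q"
      using assms by (simp add: q_def field_simps)
    also have "\<dots> \<le> real (N - j) * q"
      using j \<open>j < K\<close> \<open>K \<le> N\<close> N K q
      by (intro mult_right_mono) (auto simp: of_nat_diff left_diff_distrib)
    finally show "real (Suc j) * (1 - q) \<le> real (N - j) * q" .
  next
    fix j
    assume "K \<le> j" "j < N"
    have "real (N - j) = real N - real j" "real K \<le> real j" "(a - b) * n = a * n - b * n"
      using \<open>K \<le> j\<close> \<open>j < N\<close> by (simp_all add: of_nat_diff left_diff_distrib)
    then have "real (N - j) * q \<le> ((a - b) * n + 1) * q"
      using N K q by (intro mult_right_mono) linarith+
    also have "\<dots> = \<rho> * (b * n * (1 - q))"
      using assms by (simp add: \<rho>_def q(3) q_def field_simps)
    also have "\<dots> \<le> \<rho> * (real (Suc j) * (1 - q))"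
      using \<open>K \<le> j\<close> K q \<rho>1 by (intro mult_left_mono mult_right_mono) auto
    finally show "real (N - j) * q \<le> \<rho> * (real (Suc j) * (1 - q))" .
  qed (use q \<rho>1 \<open>K \<le> N\<close> in auto)
  have "\<rho> ^ N \<le> exp (N / ((a - b) * n))"
    unfolding \<rho>_def using assms by (intro one_plus_inverse_power_le_exp) simp
  also have "\<dots> \<le> exp (a * n / ((a - b) * n))"
    using N assms by (intro exp_mono divide_right_mono) auto
  also have "\<dots> = exp (a / (a - b))"
    using assms by simp
  finally have "(N + 1) * \<rho> ^ N * t K \<le> (a * n + 1) * exp (a / (a - b)) * t K"
    using N q \<rho>1 by (intro mult_right_mono mult_mono) (auto simp: t_def)
  with mode have "1 \<le> (a * n + 1) * exp (a / (a - b)) * t K"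
    by linarith
  moreover have "0 < (a * n + 1) * exp (a / (a - b))"
    using assms by (simp add: add_nonneg_pos)
  ultimately show ?thesis
    by (simp add: pos_divide_le_eq mult.commute t_def)
qed

lemma binom_n_ge_exp_rate:
  assumes "0 < b" "b < a" "0 < n"
  shows "b * (a - b) / (a\<^sup>2 * (a * n + 1) * exp (a / (a - b))) * exp (real n * binom_rate a b)
    \<le> binom_n a b n"
proof -
  define q where "q = b / a"
  define w where "w = q ^ nat \<lfloor>b * n\<rfloor> * (1 - q) ^ (nat \<lfloor>a * n\<rfloor> - nat \<lfloor>b * n\<rfloor>)"
  have q: "0 < q" "q < 1" "1 - q = (a - b) / a"
    using assms by (auto simp: q_def field_simps)
  have "b * (a - b) / (a\<^sup>2 * (a * n + 1) * exp (a / (a - b))) * exp (real n * binom_rate a b)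
      = 1 / ((a * n + 1) * exp (a / (a - b))) / (exp (- real n * binom_rate a b) / (q * (1 - q)))"
    using assms by (simp add: q(3) q_def exp_minus power2_eq_square field_simps)
  also have "\<dots> \<le> binom_n a b n * w / w"
    using binomial_term_at_floor_ge[OF assms] binomial_weight_bounds(2)[OF assms(1,2), of n] q
    by (intro frac_le) (auto simp: binom_n_def w_def q_def mult.assoc)
  also have "\<dots> = binom_n a b n"
    using q(1,2) by (simp add: w_def)
  finally show ?thesis .
qed

lemma le_at_critical_point_of_concave:
  fixes f f' f'' :: "real \<Rightarrow> real"
  assumes f': "\<And>x. a \<le> x \<Longrightarrow> x \<le> b \<Longrightarrow> (f has_real_derivative f' x) (at x)"
    and f'': "\<And>x. a \<le> x \<Longrightarrow> x \<le> b \<Longrightarrow> (f' has_real_derivative f'' x) (at x)"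
    and concave: "\<And>x. a \<le> x \<Longrightarrow> x \<le> b \<Longrightarrow> f'' x \<le> 0"
    and "a \<le> c" "c \<le> b" "f' c = 0" and x: "a \<le> x" "x \<le> b"
  shows "f x \<le> f c"
proof (cases "x \<le> c")
  case True
  show ?thesis
  proof (rule DERIV_nonneg_imp_nondecreasing[OF True])
    fix t
    assume t: "x \<le> t" "t \<le> c"
    have "f' c \<le> f' t"
      by (rule DERIV_nonpos_imp_nonincreasing[OF t(2)])
        (use t x \<open>c \<le> b\<close> in \<open>auto intro!: exI[of _ "f'' _"] f'' concave\<close>)
    then show "\<exists>y. (f has_real_derivative y) (at t) \<and> 0 \<le> y"
      using t x \<open>c \<le> b\<close> \<open>f' c = 0\<close> by (intro exI[of _ "f' t"] conjI f') auto
  qed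
next
  case False
  show ?thesis
  proof (rule DERIV_nonpos_imp_nonincreasing[of c x])
    show "c \<le> x"
      using False by simp
    fix t
    assume t: "c \<le> t" "t \<le> x"
    have "f' t \<le> f' c"
      by (rule DERIV_nonpos_imp_nonincreasing[OF t(1)])
        (use t x \<open>a \<le> c\<close> in \<open>auto intro!: exI[of _ "f'' _"] f'' concave\<close>)
    then show "\<exists>y. (f has_real_derivative y) (at t) \<and> y \<le> 0"
      using t x \<open>a \<le> c\<close> \<open>f' c = 0\<close> by (intro exI[of _ "f' t"] conjI f') auto
  qed
qed

lemma has_real_derivative_binom_rate:
  assumes "(A has_real_derivative A') (at x)" "(B has_real_derivative B') (at x)"
    and "0 < B x" "B x < A x"
  shows "((\<lambda>s. binom_rate (A s) (B s)) has_real_derivative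
      A' * ln (A x) - B' * ln (B x) - (A' - B') * ln (A x - B x)) (at x)"
proof -
  have "((\<lambda>s. binom_rate (A s) (B s)) has_real_derivative
      (A' * ln (A x) + A x * (A' / A x)) - (B' * ln (B x) + B x * (B' / B x))
      - ((A' - B') * ln (A x - B x) + (A x - B x) * ((A' - B') / (A x - B x)))) (at x)"
    unfolding binom_rate_def using assms by (auto intro!: derivative_eq_intros)
  moreover have "A x * (A' / A x) = A'" "B x * (B' / B x) = B'"
    "(A x - B x) * ((A' - B') / (A x - B x)) = A' - B'"
    using assms by auto
  ultimately show ?thesis
    by (simp only:) (simp add: algebra_simps)
qed

text \<open>The slope is chosen so that \<open>excess' (1/2) = 0\<close>.\<close>

definition slope :: real where
  "slope = (ln 3 - ln 2) / (2 * ln 2)"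

definition lower_index :: "real \<Rightarrow> real" where
  "lower_index \<sigma> = 1/4 + slope * (\<sigma> - 1/2)"

definition excess :: "real \<Rightarrow> real" where
  "excess \<sigma> = binom_rate (1 - \<sigma>/2) (lower_index \<sigma>) - binom_rate (1/2) (lower_index \<sigma>)"

definition excess' :: "real \<Rightarrow> real" where
  "excess' \<sigma> = - ln (1 - \<sigma>/2) / 2 + (1/2 + slope) * ln (1 - \<sigma>/2 - lower_index \<sigma>)
    - slope * ln (1/2 - lower_index \<sigma>)"

definition excess'' :: "real \<Rightarrow> real" where
  "excess'' \<sigma> = 1 / (4 - 2 * \<sigma>) - (1/2 + slope)\<^sup>2 / (1 - \<sigma>/2 - lower_index \<sigma>)
    + slope\<^sup>2 / (1/2 - lower_index \<sigma>)"

lemma slope_bounds: "0 < slope" "slope \<le> 3/10"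
proof -
  have "ln 2 < (ln 3 :: real)"
    by simp
  then show "0 < slope"
    by (simp add: slope_def)
  have "ln ((3::real) ^ 5) \<le> ln (2 ^ 8)"
    by (subst ln_le_cancel_iff) auto
  then have "5 * ln 3 \<le> 8 * ln (2::real)"
    by (simp only: ln_realpow)
  then show "slope \<le> 3/10"
    by (simp add: slope_def field_simps)
qed

lemma lower_index_bounds:
  assumes "0 \<le> \<sigma>" "\<sigma> \<le> 1"
  shows "1/10 \<le> lower_index \<sigma>" "lower_index \<sigma> \<le> 2/5" "1/10 \<le> 1 - \<sigma>/2 - lower_index \<sigma>"
proof -
  have "0 \<le> slope * \<sigma>" "slope * \<sigma> \<le> slope"
    using assms slope_bounds mult_left_mono[of \<sigma> 1 slope] by auto
  then show "1/10 \<le> lower_index \<sigma>" "lower_index \<sigma> \<le> 2/5" "1/10 \<le> 1 - \<sigma>/2 - lower_index \<sigma>"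
    using assms slope_bounds unfolding lower_index_def right_diff_distrib by linarith+
qed

lemma lower_index_reflect: "lower_index (1 - \<sigma>) = 1/2 - lower_index \<sigma>"
  by (simp add: lower_index_def algebra_simps)

lemma lower_index_has_derivative: "(lower_index has_real_derivative slope) (at \<sigma>)"
  unfolding lower_index_def[abs_def] by (auto intro!: derivative_eq_intros)

lemma excess_has_derivative:
  assumes "0 \<le> \<sigma>" "\<sigma> \<le> 1"
  shows "(excess has_real_derivative excess' \<sigma>) (at \<sigma>)"
proof -
  note bounds = lower_index_bounds[OF assms]
  have "((\<lambda>s. binom_rate (1 - s/2) (lower_index s)) has_real_derivative
      (- 1/2) * ln (1 - \<sigma>/2) - slope * ln (lower_index \<sigma>)
        - (- 1/2 - slope) * ln (1 - \<sigma>/2 - lower_index \<sigma>)) (at \<sigma>)"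
    using bounds by (intro has_real_derivative_binom_rate lower_index_has_derivative)
      (auto intro!: derivative_eq_intros)
  moreover have "((\<lambda>s. binom_rate (1/2) (lower_index s)) has_real_derivative
      0 * ln (1/2) - slope * ln (lower_index \<sigma>) - (0 - slope) * ln (1/2 - lower_index \<sigma>)) (at \<sigma>)"
    using bounds by (intro has_real_derivative_binom_rate lower_index_has_derivative) auto
  ultimately show ?thesis
    unfolding excess_def[abs_def] excess'_def
    by (auto intro: DERIV_diff[THEN DERIV_cong] simp: algebra_simps)
qed

lemma excess'_has_derivative:
  assumes "0 \<le> \<sigma>" "\<sigma> \<le> 1"
  shows "(excess' has_real_derivative excess'' \<sigma>) (at \<sigma>)"
proof -
  note bounds = lower_index_bounds[OF assms]
  have neg_square: "(- (1/2) - c) * (1/2 + c) / D = - ((1/2 + c)\<^sup>2 / D)" for c D :: real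
  proof -
    have "- (1/2) - c = - (1/2 + c)"
      by simp
    then show ?thesis
      by (simp only: power2_eq_square mult_minus_left minus_divide_left[symmetric])
  qed
  have "((\<lambda>s. - ln (1 - s/2) / 2) has_real_derivative 1 / (4 - 2 * \<sigma>)) (at \<sigma>)"
    using assms by (auto intro!: derivative_eq_intros simp: divide_simps)
  moreover have "((\<lambda>s. (1/2 + slope) * ln (1 - s/2 - lower_index s)) has_real_derivative
      - (1/2 + slope)\<^sup>2 / (1 - \<sigma>/2 - lower_index \<sigma>)) (at \<sigma>)"
    using bounds
    by (auto intro!: derivative_eq_intros lower_index_has_derivative simp: neg_square)
  moreover have "((\<lambda>s. slope * ln (1/2 - lower_index s)) has_real_derivative
      - slope\<^sup>2 / (1/2 - lower_index \<sigma>)) (at \<sigma>)"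
    using bounds
    by (auto intro!: derivative_eq_intros lower_index_has_derivative simp: power2_eq_square)
  ultimately show ?thesis
    unfolding excess'_def[abs_def] excess''_def
    by (rule DERIV_cong[OF DERIV_diff[OF DERIV_add]]) simp
qed

lemma excess''_nonpos:
  assumes "0 \<le> \<sigma>" "\<sigma> \<le> 1"
  shows "excess'' \<sigma> \<le> 0"
proof -
  note bounds = lower_index_bounds[OF assms]
  define U V W where "U = 1 - \<sigma>/2" and "V = 1 - \<sigma>/2 - lower_index \<sigma>" and "W = 1/2 - lower_index \<sigma>"
  have pos: "0 < U" "0 < V" "0 < W"
    using assms bounds by (auto simp: U_def V_def W_def)
  define F where "F = 4 * U * (1/2 + slope)\<^sup>2 * W - V * W - 4 * U * slope\<^sup>2 * V"
  have "F = 1/16 + 3/4 * slope - 3/4 * slope\<^sup>2 - (slope/2 + slope\<^sup>2) * (\<sigma> - 1/2)"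
    by (simp add: F_def U_def V_def W_def lower_index_def power2_eq_square algebra_simps)
  moreover have "(slope/2 + slope\<^sup>2) * (\<sigma> - 1/2) \<le> (slope/2 + slope\<^sup>2) * (1/2)"
    using assms slope_bounds by (intro mult_left_mono) auto
  moreover have "0 \<le> (1 - 2 * slope) * (1 + 10 * slope)"
    using slope_bounds by (intro mult_nonneg_nonneg) auto
  ultimately have F: "0 \<le> F"
    by (simp add: power2_eq_square algebra_simps)
  have "4 - 2 * \<sigma> = 4 * U" "1 - \<sigma>/2 - lower_index \<sigma> = V" "1/2 - lower_index \<sigma> = W"
    by (simp_all add: U_def V_def W_def)
  then have "excess'' \<sigma> = 1 / (4 * U) - (1/2 + slope)\<^sup>2 / V + slope\<^sup>2 / W"
    unfolding excess''_def by simp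
  also have "\<dots> = - F / (4 * U * V * W)"
    using pos by (simp add: F_def field_simps power2_eq_square)
  finally show ?thesis
    using pos F by (simp add: divide_nonneg_pos)
qed

lemma lower_index_half [simp]: "lower_index (1/2) = 1/4"
  by (simp add: lower_index_def)

lemma excess'_half: "excess' (1/2) = 0"
proof -
  have "ln (4::real) = 2 * ln 2"
    using ln_realpow[of 2 2] by simp
  then show ?thesis
    by (simp add: excess'_def slope_def ln_div field_simps)
qed

lemma excess_half: "excess (1/2) = ln 2 * (1 - bin_entropy (1/4))"
proof -
  have "excess (1/2) = 3/4 * ln (3/4) + 1/4 * ln (1/4) - ln (1/2)"
    unfolding excess_def binom_rate_def by (simp add: algebra_simps)
  moreover have "ln 2 * bin_entropy (1/4) = - (1/4) * ln (1/4) - 3/4 * ln (3/4)"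
    by (simp add: bin_entropy_def log_def field_simps)
  moreover have "ln (1/2 :: real) = - ln 2"
    by (simp add: ln_div)
  ultimately show ?thesis
    by (simp only: right_diff_distrib mult_1_right)
qed

lemma excess_le_excess_half:
  assumes "0 \<le> \<sigma>" "\<sigma> \<le> 1"
  shows "excess \<sigma> \<le> excess (1/2)"
  by (rule le_at_critical_point_of_concave[where f' = excess' and f'' = excess'' and a = 0 and b = 1])
    (use assms in \<open>auto intro: excess_has_derivative excess'_has_derivative excess''_nonpos
      simp: excess'_half\<close>)

lemma binom_rate_reflect:
  "binom_rate (1 - (1 - \<sigma>)/2) (\<sigma>/2 + lower_index \<sigma>)
    = binom_rate (1/2) (lower_index \<sigma>) + excess (1 - \<sigma>)"
proof -
  have complement: "binom_rate a b = binom_rate a (a - b)" for a b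
    by (simp add: binom_rate_def algebra_simps)
  have "1 - (1 - \<sigma>)/2 - (\<sigma>/2 + lower_index \<sigma>) = lower_index (1 - \<sigma>)"
    by (simp add: lower_index_reflect field_simps)
  then have "binom_rate (1 - (1 - \<sigma>)/2) (\<sigma>/2 + lower_index \<sigma>)
      = binom_rate (1 - (1 - \<sigma>)/2) (lower_index (1 - \<sigma>))"
    using complement by metis
  moreover have "binom_rate (1/2) (lower_index \<sigma>) = binom_rate (1/2) (lower_index (1 - \<sigma>))"
    by (subst complement) (simp add: lower_index_reflect)
  ultimately show ?thesis
    by (simp add: excess_def)
qed

lemma binom_n_le_of_gap:
  assumes "0 < b" "a \<le> 1" "1/10 \<le> a - b"
  shows "binom_n a b n \<le> 10 * exp (n * binom_rate a b)"
proof -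
  have "binom_n a b n \<le> a / (a - b) * exp (n * binom_rate a b)"
    using assms by (intro binom_n_le_exp_rate) auto
  also have "\<dots> \<le> 10 * exp (n * binom_rate a b)"
    using assms by (intro mult_right_mono) (auto simp: field_simps)
  finally show ?thesis .
qed

lemma binom_n_half_ge:
  assumes "1/10 \<le> b" "b \<le> 2/5" "0 < n"
  shows "8 / (25 * (real n + 2) * exp 5) * exp (n * binom_rate (1/2) b) \<le> binom_n (1/2) b n"
proof -
  have "0 \<le> (b - 1/10) * (2/5 - b)"
    using assms by (intro mult_nonneg_nonneg) auto
  then have "1/25 \<le> b * (1/2 - b)"
    by (simp add: algebra_simps)
  moreover have "exp ((1/2) / (1/2 - b)) \<le> exp 5"
    using assms by (simp add: field_simps)
  moreover have "8 / (25 * (real n + 2) * exp 5) = (1/25) / ((1/2)\<^sup>2 * (1/2 * n + 1) * exp 5)"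
    by (simp add: field_simps power2_eq_square)
  ultimately have "8 / (25 * (real n + 2) * exp 5)
      \<le> b * (1/2 - b) / ((1/2)\<^sup>2 * (1/2 * n + 1) * exp ((1/2) / (1/2 - b)))"
    using assms by (simp only:) (intro frac_le mult_left_mono; auto intro: mult_nonneg_nonneg)
  then have "8 / (25 * (real n + 2) * exp 5) * exp (n * binom_rate (1/2) b)
      \<le> b * (1/2 - b) / ((1/2)\<^sup>2 * (1/2 * n + 1) * exp ((1/2) / (1/2 - b)))
        * exp (n * binom_rate (1/2) b)"
    by (rule mult_right_mono) simp
  also have "\<dots> \<le> binom_n (1/2) b n"
    using assms by (intro binom_n_ge_exp_rate) auto
  finally show ?thesis .
qed

lemma ratio_at_witness_le:
  assumes "0 \<le> \<sigma>" "\<sigma> \<le> 1" "0 < n"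
  shows "(binom_n (1 - \<sigma>/2) (lower_index \<sigma>) n + binom_n (1 - (1 - \<sigma>)/2) (\<sigma>/2 + lower_index \<sigma>) n)
      / binom_n (1/2) (lower_index \<sigma>) n
    \<le> 125/2 * exp 5 * (real n + 2) * exp (n * excess (1/2))"
    (is "(?A + ?B) / ?D \<le> _")
proof -
  note bounds = lower_index_bounds[OF assms(1,2)]
  define r where "r = binom_rate (1/2) (lower_index \<sigma>)"
  have num1: "?A \<le> 10 * exp (n * (r + excess \<sigma>))"
    using binom_n_le_of_gap[of "lower_index \<sigma>" "1 - \<sigma>/2" n] bounds assms
    by (simp add: r_def excess_def)
  have num2: "?B \<le> 10 * exp (n * (r + excess (1 - \<sigma>)))"
  proof -
    have "1/10 \<le> (1 - (1 - \<sigma>)/2) - (\<sigma>/2 + lower_index \<sigma>)"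
      using bounds by (simp add: field_simps)
    then show ?thesis
      using binom_n_le_of_gap[of "\<sigma>/2 + lower_index \<sigma>" "1 - (1 - \<sigma>)/2" n] bounds assms
      by (simp add: r_def binom_rate_reflect)
  qed
  have mono: "exp (n * (r + excess s)) \<le> exp (n * (r + excess (1/2)))" if "0 \<le> s" "s \<le> 1" for s
    using excess_le_excess_half[OF that] by (simp add: mult_left_mono)
  have "0 \<le> 1 - \<sigma>" "1 - \<sigma> \<le> 1"
    using assms by auto
  with num1 num2 mono[OF assms(1,2)] mono[OF this]
  have "?A + ?B \<le> 20 * exp (n * (r + excess (1/2)))"
    by linarith
  moreover have "8 / (25 * (real n + 2) * exp 5) * exp (n * r) \<le> ?D"
    using binom_n_half_ge bounds assms by (simp add: r_def)
  ultimately have "(?A + ?B) / ?D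
    \<le> 20 * exp (n * (r + excess (1/2))) / (8 / (25 * (real n + 2) * exp 5) * exp (n * r))"
    by (intro frac_le) auto
  also have "\<dots> = 125/2 * exp 5 * (real n + 2) * exp (n * excess (1/2))"
    by (simp add: distrib_left exp_add field_simps)
  finally show ?thesis .
qed

lemma INF_ratio_le:
  assumes "0 \<le> \<sigma>" "\<sigma> \<le> 1" "125 * exp 5 \<le> real n" "2 \<le> n"
  shows "(INF x \<in> {x::real. 0 \<le> x - \<sigma>/2 \<and> x - \<sigma>/2 \<le> 1/2 \<and> 0 \<le> x \<and> x \<le> 1 - (1 - \<sigma>)/2}.
       (binom_n (1 - \<sigma>/2) (x - \<sigma>/2) n + binom_n (1 - (1 - \<sigma>)/2) x n)
         / binom_n (1/2) (x - \<sigma>/2) n)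
    \<le> 2 powr (real n * (1 - bin_entropy (1/4))) * real n powr 2"
    (is "(INF x \<in> ?S. ?ratio x) \<le> _")
proof -
  have "\<sigma>/2 + lower_index \<sigma> \<in> ?S"
    using lower_index_bounds[OF assms(1,2)] assms by (auto simp: field_simps)
  moreover have "bdd_below (?ratio ` ?S)"
    by (rule bdd_belowI[of _ 0]) (auto simp: binom_n_def)
  ultimately have "(INF x \<in> ?S. ?ratio x) \<le> ?ratio (\<sigma>/2 + lower_index \<sigma>)"
    by (rule cINF_lower[rotated])
  also have "\<dots> \<le> 125/2 * exp 5 * (real n + 2) * exp (n * excess (1/2))"
    using ratio_at_witness_le[of \<sigma> n] assms by (simp only: add_diff_cancel_left')
  also have "\<dots> \<le> real n powr 2 * exp (n * excess (1/2))"
  proof -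
    have "125/2 * exp 5 * (real n + 2) \<le> 125 * exp 5 * n"
      using assms by (simp add: field_simps)
    also have "\<dots> \<le> real n * real n"
      using assms by (intro mult_right_mono) auto
    finally show ?thesis
      using assms by (intro mult_right_mono) (auto simp: powr_realpow power2_eq_square)
  qed
  also have "\<dots> = 2 powr (real n * (1 - bin_entropy (1/4))) * real n powr 2"
    by (simp add: excess_half powr_def mult_ac)
  finally show ?thesis .
qed

theorem mainTheorem13:
  shows "\<exists>c::real > 0. \<exists>N::nat. \<forall>n \<ge> N. \<forall>\<sigma>::real \<in> {0..1}.
    (INF x \<in> {x::real. 0 \<le> x - \<sigma>/2 \<and> x - \<sigma>/2 \<le> 1/2 \<and> 0 \<le> x \<and> x \<le> 1 - (1 - \<sigma>)/2}.
       (binom_n (1 - \<sigma>/2) (x - \<sigma>/2) n + binom_n (1 - (1 - \<sigma>)/2) x n)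
         / binom_n (1/2) (x - \<sigma>/2) n)
    \<le> 2 powr (real n * (1 - bin_entropy (1/4))) * real n powr c"
  by (intro exI[of _ "2::real"] exI[of _ "nat \<lceil>125 * exp (5::real)\<rceil> + 2"]
      conjI allI impI ballI INF_ratio_le) (auto, linarith)

end
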